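(* Let $\Lambda=D+A_n+A_p$ be an $n\times n$ SDD matrix, where $D$ is the diagonal of $\Lambda$, $A_p$ contains all positive off-diagonal entries of $\Lambda$ and $A_n$ contains all negative off-diagonal entries. Let $$S=\begin{pmatrix}D+A_n&-A_p\\-A_p&D+A_n\end{pmatrix},$$ and let $\tilde C$ be a matrix with $\tilde C\tilde C^\top=S^{-1}$. Then the matrix $C=\frac1{\sqrt2}\begin{pmatrix}I_n&-I_n\end{pmatrix}\tilde C$ satisfies $CC^\top=\Lambda^{-1}$.
   Context: SDD: symmetric matrix with $m_{ii}>\sum_{j\ne i}|m_{ij}|$ for all $i$. $I_n$ is the $n\times n$ identity. *)

theory Defs
  imports "HOL-Analysis.Analysis"
begin

definition SDD :: "real^'n^'n \<Rightarrow> bool" where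
  "SDD M \<longleftrightarrow> transpose M = M \<and>
     (\<forall>i. M $ i $ i > (\<Sum>j\<in>UNIV - {i}. \<bar>M $ i $ j\<bar>))"

definition diag_part :: "real^'n^'n \<Rightarrow> real^'n^'n" where
  "diag_part M = (\<chi> i j. if i = j then M $ i $ j else 0)"

definition pos_offdiag :: "real^'n^'n \<Rightarrow> real^'n^'n" where
  "pos_offdiag M = (\<chi> i j. if i \<noteq> j \<and> M $ i $ j > 0 then M $ i $ j else 0)"

definition neg_offdiag :: "real^'n^'n \<Rightarrow> real^'n^'n" where
  "neg_offdiag M = (\<chi> i j. if i \<noteq> j \<and> M $ i $ j < 0 then M $ i $ j else 0)"

definition block_mat :: "real^'n^'n \<Rightarrow> real^'n^'n \<Rightarrow> real^'n^'n \<Rightarrow> real^'n^'n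
    \<Rightarrow> real^('n + 'n)^('n + 'n)" where
  "block_mat A B C D = (\<chi> r c. case (r, c) of
      (Inl i, Inl j) \<Rightarrow> A $ i $ j | (Inl i, Inr j) \<Rightarrow> B $ i $ j
    | (Inr i, Inl j) \<Rightarrow> C $ i $ j | (Inr i, Inr j) \<Rightarrow> D $ i $ j)"

definition I_minus_I :: "real^('n + 'n)^'n" where
  "I_minus_I = (\<chi> i r. case r of Inl j \<Rightarrow> (mat 1 :: real^'n^'n) $ i $ j
                              | Inr j \<Rightarrow> - (mat 1 :: real^'n^'n) $ i $ j)"

definition S_mat :: "real^'n^'n \<Rightarrow> real^('n + 'n)^('n + 'n)" where
  "S_mat L = block_mat (diag_part L + neg_offdiag L) (- pos_offdiag L)
                       (- pos_offdiag L) (diag_part L + neg_offdiag L)"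

end

theory Submission
  imports Defs
begin

(* Strict row diagonal dominance forces invertibility: at an entry of maximal modulus of a
   kernel vector the diagonal term cannot be cancelled by the off-diagonal ones. Row by row, S has
   the same diagonal and the same off-diagonal absolute row sum as Lambda, so S is invertible too.
   With P = (I -I) one computes S P^T = P^T Lambda, because (D + A_n) - (-A_p) = Lambda, and
   P P^T = 2 I. Hence S^-1 P^T = P^T Lambda^-1, and
   C C^T = P S^-1 P^T / 2 = P P^T Lambda^-1 / 2 = Lambda^-1. *)

lemma
  fixes A :: "'a::field^'n^'n"
  assumes "invertible A"
  shows matrix_inv_left: "matrix_inv A ** A = mat 1"
    and matrix_inv_right: "A ** matrix_inv A = mat 1"
  using someI_ex[OF assms[unfolded invertible_def]] by (simp_all add: matrix_inv_def)

lemma matrix_inv_intertwining: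
  fixes S :: "'a::field^'m^'m" and L :: "'a^'n^'n" and Q :: "'a^'n^'m"
  assumes "invertible S" "invertible L" and SQ: "S ** Q = Q ** L"
  shows "matrix_inv S ** Q = Q ** matrix_inv L"
proof -
  have "matrix_inv S ** Q = matrix_inv S ** (Q ** L) ** matrix_inv L"
    using assms(2) by (simp add: matrix_inv_right flip: matrix_mul_assoc)
  also have "\<dots> = (matrix_inv S ** S) ** (Q ** matrix_inv L)"
    by (metis SQ matrix_mul_assoc)
  finally show ?thesis
    using assms(1) by (simp add: matrix_inv_left)
qed

definition diag_dominant :: "'a::linordered_field^'n^'n \<Rightarrow> bool" where
  "diag_dominant M \<longleftrightarrow> (\<forall>i. (\<Sum>j\<in>UNIV - {i}. \<bar>M $ i $ j\<bar>) < \<bar>M $ i $ i\<bar>)"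

lemma diag_dominant_invertible:
  fixes M :: "'a::linordered_field^'n^'n"
  assumes "diag_dominant M"
  shows "invertible M"
proof -
  have "x = 0" if Mx: "M *v x = 0" for x
  proof -
    obtain i where "\<bar>x $ i\<bar> = Max (range (\<lambda>j. \<bar>x $ j\<bar>))"
      using Max_in[of "range (\<lambda>j. \<bar>x $ j\<bar>)"] by fastforce
    then have max: "\<bar>x $ j\<bar> \<le> \<bar>x $ i\<bar>" for j
      by simp
    have "M $ i $ i * x $ i = - (\<Sum>j\<in>UNIV - {i}. M $ i $ j * x $ j)"
      using Mx by (simp add: vec_eq_iff matrix_vector_mult_def sum.remove[of UNIV i] eq_neg_iff_add_eq_0)
    then have "\<bar>M $ i $ i\<bar> * \<bar>x $ i\<bar> = \<bar>\<Sum>j\<in>UNIV - {i}. M $ i $ j * x $ j\<bar>"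
      by (simp flip: abs_mult)
    also have "\<dots> \<le> (\<Sum>j\<in>UNIV - {i}. \<bar>M $ i $ j\<bar> * \<bar>x $ i\<bar>)"
      by (rule order_trans[OF sum_abs sum_mono]) (simp add: abs_mult max mult_left_mono)
    finally have "(\<bar>M $ i $ i\<bar> - (\<Sum>j\<in>UNIV - {i}. \<bar>M $ i $ j\<bar>)) * \<bar>x $ i\<bar> \<le> 0"
      by (simp add: sum_distrib_right left_diff_distrib)
    moreover have "(\<Sum>j\<in>UNIV - {i}. \<bar>M $ i $ j\<bar>) < \<bar>M $ i $ i\<bar>"
      using assms by (simp add: diag_dominant_def)
    ultimately have "\<bar>x $ i\<bar> \<le> 0"
      by (simp add: mult_le_0_iff)
    then show "x = 0"
      using max by (metis abs_le_zero_iff order_trans vec_eq_iff zero_index)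
  qed
  then show ?thesis
    using matrix_left_invertible_ker invertible_left_inverse by blast
qed

lemma sum_UNIV_Plus:
  "sum f (UNIV :: ('a::finite + 'b::finite) set) = (\<Sum>i\<in>UNIV. f (Inl i)) + (\<Sum>j\<in>UNIV. f (Inr j))"
  by (simp add: sum.Plus flip: UNIV_Plus_UNIV)

lemma block_mat_entries [simp]:
  "block_mat A B C D $ Inl i $ Inl j = A $ i $ j" "block_mat A B C D $ Inl i $ Inr j = B $ i $ j"
  "block_mat A B C D $ Inr i $ Inl j = C $ i $ j" "block_mat A B C D $ Inr i $ Inr j = D $ i $ j"
  by (simp_all add: block_mat_def)

lemma diag_dominant_block_mat:
  fixes A B :: "real^'n^'n"
  assumes "\<And>i. (\<Sum>j\<in>UNIV - {i}. \<bar>A $ i $ j\<bar>) + (\<Sum>j\<in>UNIV. \<bar>B $ i $ j\<bar>) < \<bar>A $ i $ i\<bar>"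
  shows "diag_dominant (block_mat A B B A)"
  unfolding diag_dominant_def
proof
  fix r :: "'n + 'n"
  show "(\<Sum>c\<in>UNIV - {r}. \<bar>block_mat A B B A $ r $ c\<bar>) < \<bar>block_mat A B B A $ r $ r\<bar>"
    using assms by (cases r) (simp_all add: sum_diff1 sum_UNIV_Plus ac_simps)
qed

lemma diag_dominant_if_SDD: "SDD L \<Longrightarrow> diag_dominant L"
  by (auto simp: SDD_def diag_dominant_def intro: order.strict_trans2)

lemma diag_dominant_S_mat:
  assumes "SDD L"
  shows "diag_dominant (S_mat L)"
  unfolding S_mat_def
proof (rule diag_dominant_block_mat)
  fix i
  have "(\<Sum>j\<in>UNIV - {i}. \<bar>(diag_part L + neg_offdiag L) $ i $ j\<bar>) + (\<Sum>j\<in>UNIV. \<bar>(- pos_offdiag L) $ i $ j\<bar>)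
      = (\<Sum>j\<in>UNIV - {i}. \<bar>(diag_part L + neg_offdiag L) $ i $ j\<bar> + \<bar>pos_offdiag L $ i $ j\<bar>)"
      (is "?off = _")
    by (subst sum.remove[of UNIV i]) (simp_all add: sum.distrib pos_offdiag_def)
  also have "\<dots> = (\<Sum>j\<in>UNIV - {i}. \<bar>L $ i $ j\<bar>)"
    by (intro sum.cong) (auto simp: diag_part_def neg_offdiag_def pos_offdiag_def)
  also have "\<dots> < \<bar>(diag_part L + neg_offdiag L) $ i $ i\<bar>"
    using diag_dominant_if_SDD[OF assms] by (simp add: diag_dominant_def diag_part_def neg_offdiag_def)
  finally show "?off < \<bar>(diag_part L + neg_offdiag L) $ i $ i\<bar>" .
qed

lemma if_zero_mult: "(if P then a else 0) * b = (if P then a * b else (0 :: 'a :: mult_zero))"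
  and mult_if_zero: "b * (if P then a else 0) = (if P then b * a else (0 :: 'a :: mult_zero))"
  by simp_all

lemma I_minus_I_Inl [simp]: "(I_minus_I :: real^('n + 'n)^'n) $ i $ Inl j = (if i = j then 1 else 0)"
  and I_minus_I_Inr [simp]: "(I_minus_I :: real^('n + 'n)^'n) $ i $ Inr j = (if i = j then -1 else 0)"
  by (simp_all add: I_minus_I_def mat_def)

lemma I_minus_I_mult_transpose: "(I_minus_I :: real^('n + 'n)^'n) ** transpose I_minus_I = 2 *\<^sub>R mat 1"
  by (simp add: vec_eq_iff matrix_matrix_mult_def transpose_def sum_UNIV_Plus mat_def
      if_zero_mult mult_if_zero)

lemma block_mat_mult_transpose_I_minus_I:
  fixes A B :: "real^'n^'n"
  shows "block_mat A B B A ** transpose I_minus_I = transpose I_minus_I ** (A - B)"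
  unfolding vec_eq_iff matrix_matrix_mult_def
proof (intro allI)
  fix r :: "'n + 'n" and j
  show "(\<chi> i j. \<Sum>k\<in>UNIV. block_mat A B B A $ i $ k * transpose I_minus_I $ k $ j) $ r $ j =
        (\<chi> i j. \<Sum>k\<in>UNIV. transpose I_minus_I $ i $ k * (A - B) $ k $ j) $ r $ j"
    by (cases r) (simp_all add: transpose_def sum_UNIV_Plus if_zero_mult mult_if_zero)
qed

lemma S_mat_mult_transpose_I_minus_I: "S_mat L ** transpose I_minus_I = transpose I_minus_I ** L"
proof -
  have "diag_part L + neg_offdiag L - - pos_offdiag L = L"
    by (simp add: vec_eq_iff diag_part_def neg_offdiag_def pos_offdiag_def)
  then show ?thesis
    unfolding S_mat_def by (metis block_mat_mult_transpose_I_minus_I)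
qed

theorem mainTheorem12:
  fixes L :: "real^'n^'n" and Ct :: "real^'k^('n + 'n)"
  assumes "SDD L"
    and "Ct ** transpose Ct = matrix_inv (S_mat L)"
  shows "((1 / sqrt 2) *\<^sub>R (I_minus_I ** Ct)) ** transpose ((1 / sqrt 2) *\<^sub>R (I_minus_I ** Ct))
         = matrix_inv L"
proof -
  let ?P = "I_minus_I :: real^('n + 'n)^'n"
  have "invertible (S_mat L)" "invertible L"
    using assms(1) by (simp_all add: diag_dominant_invertible diag_dominant_S_mat diag_dominant_if_SDD)
  then have S_inv_P: "matrix_inv (S_mat L) ** transpose ?P = transpose ?P ** matrix_inv L"
    using S_mat_mult_transpose_I_minus_I by (rule matrix_inv_intertwining)
  have "((1 / sqrt 2) *\<^sub>R (?P ** Ct)) ** transpose ((1 / sqrt 2) *\<^sub>R (?P ** Ct))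
      = (1 / 2) *\<^sub>R (?P ** (Ct ** transpose Ct) ** transpose ?P)"
    by (simp add: transpose_scalar matrix_scalar_ac matrix_transpose_mul matrix_mul_assoc
        flip: scalar_matrix_assoc)
  also have "\<dots> = (1 / 2) *\<^sub>R ((?P ** transpose ?P) ** matrix_inv L)"
    by (simp add: assms(2) S_inv_P flip: matrix_mul_assoc)
  also have "\<dots> = matrix_inv L"
    by (simp add: I_minus_I_mult_transpose flip: scalar_matrix_assoc)
  finally show ?thesis .
qed

end
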